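(* Let $\mathcal{L}$ be a nonempty set and $\mathcal{C}: 2^{\mathcal{L}}\to 2^{\mathcal{L}}$ an L-logics. Let $n\ge 1$ and let $T_0,\dots,T_{n-1}$ be theories with $T_0\le T_1$, $T_1\le T_2$, $\dots$, $T_{n-2}\le T_{n-1}$, $T_{n-1}\le T_0$. Then $T_0=T_1=\dots=T_{n-1}$.
   Context: An L-logics is a map $\mathcal{C}: 2^{\mathcal{L}}\to 2^{\mathcal{L}}$ satisfying Inclusion ($A\subseteq\mathcal{C}(A)$ for all $A$) and Loop: for every $n\ge1$ and $A_0,\dots,A_{n-1}\subseteq\mathcal{L}$, if $A_i\subseteq\mathcal{C}(A_{i+1})$ for all $i=0,\dots,n-1$ (indices mod $n$) then $\mathcal{C}(A_0)=\mathcal{C}(A_1)$. A theory is a set $T\subseteq\mathcal{L}$ with $\mathcal{C}(T)=T$. For theories $T,S$: $T\le S$ iff there is $A\subseteq S$ with $\mathcal{C}(A)=T$. *)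

theory Defs
  imports Main
begin

definition l_logics :: "'a set \<Rightarrow> ('a set \<Rightarrow> 'a set) \<Rightarrow> bool" where
  "l_logics L C \<longleftrightarrow>
     (\<forall>A. A \<subseteq> L \<longrightarrow> C A \<subseteq> L) \<and>
     (\<forall>A. A \<subseteq> L \<longrightarrow> A \<subseteq> C A) \<and>
     (\<forall>(n::nat) (As::nat \<Rightarrow> 'a set). n \<ge> 1 \<longrightarrow> (\<forall>i<n. As i \<subseteq> L) \<longrightarrow>
        (\<forall>i<n. As i \<subseteq> C (As ((i + 1) mod n))) \<longrightarrow> C (As 0) = C (As (1 mod n)))"

definition is_theory :: "'a set \<Rightarrow> ('a set \<Rightarrow> 'a set) \<Rightarrow> 'a set \<Rightarrow> bool" where
  "is_theory L C T \<longleftrightarrow> T \<subseteq> L \<and> C T = T"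

definition theory_le :: "('a set \<Rightarrow> 'a set) \<Rightarrow> 'a set \<Rightarrow> 'a set \<Rightarrow> bool" where
  "theory_le C T S \<longleftrightarrow> (\<exists>A. A \<subseteq> S \<and> C A = T)"

end

theory Submission
  imports Defs
begin

text \<open>Choose generators \<open>A i \<subseteq> T (i + 1)\<close> with \<open>C (A i) = T i\<close>. Then
  \<open>A i \<subseteq> C (A (i + 1))\<close> for all \<open>i\<close> (indices mod \<open>n\<close>), so the \<open>A i\<close> form a loop.
  Loop only equates the closures of its first two members, but applied to every rotation of the
  loop it makes all closures \<open>C (A i) = T i\<close> equal.\<close>

lemma l_logicsD_loop:
  fixes As :: "nat \<Rightarrow> 'a set" and m :: nat
  assumes "l_logics L C" "m \<ge> 1" "\<forall>i<m. As i \<subseteq> L"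
    and "\<forall>i<m. As i \<subseteq> C (As ((i + 1) mod m))"
  shows "C (As 0) = C (As (1 mod m))"
  using assms unfolding l_logics_def by blast

lemma l_logics_loop_consecutive:
  fixes As :: "nat \<Rightarrow> 'a set" and m :: nat
  assumes "l_logics L C" "m \<ge> 1" "\<forall>i<m. As i \<subseteq> L"
    and loop: "\<forall>i<m. As i \<subseteq> C (As ((i + 1) mod m))"
    and "k < m"
  shows "C (As k) = C (As ((k + 1) mod m))"
proof -
  define Bs where "Bs j = As ((j + k) mod m)" for j
  have shift: "((j + k) mod m + 1) mod m = ((j + 1) mod m + k) mod m" for j
    by (simp add: mod_simps ac_simps)
  have "\<forall>j<m. Bs j \<subseteq> L"
    using assms(2,3) unfolding Bs_def by simp
  moreover have "\<forall>j<m. Bs j \<subseteq> C (Bs ((j + 1) mod m))"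
    using assms(2) loop unfolding Bs_def shift[symmetric] by simp
  ultimately have "C (Bs 0) = C (Bs (1 mod m))"
    using l_logicsD_loop[OF assms(1,2)] by blast
  moreover have "(1 mod m + k) mod m = (k + 1) mod m"
    by (simp add: mod_simps ac_simps)
  ultimately show ?thesis
    using \<open>k < m\<close> unfolding Bs_def by simp
qed

lemma l_logics_loop_closures_eq:
  fixes As :: "nat \<Rightarrow> 'a set" and m :: nat
  assumes "l_logics L C" "m \<ge> 1" "\<forall>i<m. As i \<subseteq> L"
    and "\<forall>i<m. As i \<subseteq> C (As ((i + 1) mod m))"
  shows "i < m \<Longrightarrow> C (As i) = C (As 0)"
proof (induction i)
  case 0
  then show ?case by simp
next
  case (Suc i)
  then have "C (As i) = C (As (Suc i))"
    using l_logics_loop_consecutive[OF assms(1-4), of i] by simp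
  with Suc show ?case by simp
qed

theorem lemma18:
  fixes L :: "'a set" and C :: "'a set \<Rightarrow> 'a set" and n :: nat and T :: "nat \<Rightarrow> 'a set"
  assumes "L \<noteq> {}"
    and "l_logics L C"
    and "n \<ge> 1"
    and "\<forall>i<n. is_theory L C (T i)"
    and "\<forall>i<n. theory_le C (T i) (T ((i + 1) mod n))"
  shows "\<forall>i<n. \<forall>j<n. T i = T j"
proof -
  obtain A where A: "\<And>i. i < n \<Longrightarrow> A i \<subseteq> T ((i + 1) mod n) \<and> C (A i) = T i"
    using assms(5) unfolding theory_le_def by metis
  have T_sub_L: "\<And>i. i < n \<Longrightarrow> T i \<subseteq> L"
    using assms(4) unfolding is_theory_def by blast
  have next_lt: "(i + 1) mod n < n" for i
    using assms(3) by simp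
  have "\<forall>i<n. A i \<subseteq> L"
    using A T_sub_L next_lt by blast
  moreover have "\<forall>i<n. A i \<subseteq> C (A ((i + 1) mod n))"
    using A next_lt by simp
  ultimately have "\<And>i. i < n \<Longrightarrow> T i = C (A 0)"
    using l_logics_loop_closures_eq[OF assms(2,3)] A by metis
  then show ?thesis by simp
qed

end
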